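(* Let $\omega\ge 2$ and let $\Gamma$ be a finite simple graph on $n$ vertices which is $k$-regular and $\omega$-clique regular. Put $m=\frac{nk}{\omega(\omega-1)}$. Then \[p(C_\omega(\Gamma);\lambda)=(\lambda+\omega)^{m-n}\,p\!\left(\Gamma;\lambda+\omega-\frac{k}{\omega-1}\right),\] where $p(H;\lambda)=\det(\lambda I-A_H)$ denotes the characteristic polynomial of the adjacency matrix $A_H$ of a graph $H$.
   Context: A graph is $\omega$-clique regular if it has a nonempty edge set and every edge is contained in exactly one clique of order $\omega$. The $\omega$-clique graph $C_\omega(\Gamma)$ has as vertices the cliques of order $\omega$ in $\Gamma$ (there are exactly $m=\frac{nk}{\omega(\omega-1)}$ of them), two distinct ones adjacent iff they have nonempty intersection. *)

theory Defs
  imports "HOL-Combinatorics.Permutations" Complex_Main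
begin

definition simple_graph :: "'a set \<Rightarrow> ('a \<Rightarrow> 'a \<Rightarrow> bool) \<Rightarrow> bool" where
  "simple_graph V E \<longleftrightarrow> finite V \<and> (\<forall>u v. E u v \<longrightarrow> u \<in> V \<and> v \<in> V)
     \<and> (\<forall>u v. E u v \<longrightarrow> E v u) \<and> (\<forall>u. \<not> E u u)"

definition regular_graph :: "'a set \<Rightarrow> ('a \<Rightarrow> 'a \<Rightarrow> bool) \<Rightarrow> nat \<Rightarrow> bool" where
  "regular_graph V E k \<longleftrightarrow> (\<forall>v\<in>V. card {u\<in>V. E v u} = k)"

definition is_clique :: "'a set \<Rightarrow> ('a \<Rightarrow> 'a \<Rightarrow> bool) \<Rightarrow> nat \<Rightarrow> 'a set \<Rightarrow> bool" where
  "is_clique V E w S \<longleftrightarrow> S \<subseteq> V \<and> card S = w \<and> (\<forall>u\<in>S. \<forall>v\<in>S. u \<noteq> v \<longrightarrow> E u v)"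

definition clique_regular :: "'a set \<Rightarrow> ('a \<Rightarrow> 'a \<Rightarrow> bool) \<Rightarrow> nat \<Rightarrow> bool" where
  "clique_regular V E w \<longleftrightarrow> (\<exists>u v. E u v) \<and>
     (\<forall>u v. E u v \<longrightarrow> (\<exists>!S. is_clique V E w S \<and> u \<in> S \<and> v \<in> S))"

definition clique_graph_vertices :: "'a set \<Rightarrow> ('a \<Rightarrow> 'a \<Rightarrow> bool) \<Rightarrow> nat \<Rightarrow> 'a set set" where
  "clique_graph_vertices V E w = {S. is_clique V E w S}"

definition clique_graph_adj :: "'a set set \<Rightarrow> 'a set \<Rightarrow> 'a set \<Rightarrow> bool" where
  "clique_graph_adj C S T \<longleftrightarrow> S \<in> C \<and> T \<in> C \<and> S \<noteq> T \<and> S \<inter> T \<noteq> {}"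

definition det_on :: "'a set \<Rightarrow> ('a \<Rightarrow> 'a \<Rightarrow> 'b::comm_ring_1) \<Rightarrow> 'b" where
  "det_on V M = (\<Sum>p\<in>{p. p permutes V}. of_int (sign p) * (\<Prod>i\<in>V. M i (p i)))"

definition adj_matrix :: "('a \<Rightarrow> 'a \<Rightarrow> bool) \<Rightarrow> 'a \<Rightarrow> 'a \<Rightarrow> real" where
  "adj_matrix E i j = (if E i j then 1 else 0)"

definition char_poly_graph :: "'a set \<Rightarrow> ('a \<Rightarrow> 'a \<Rightarrow> bool) \<Rightarrow> real \<Rightarrow> real" where
  "char_poly_graph V E x = det_on V (\<lambda>i j. (if i = j then x else 0) - adj_matrix E i j)"

end

theory Submission
  imports Defs Jordan_Normal_Form.Determinant
begin

text \<open>Let \<open>N\<close> be the vertex-clique incidence matrix of the \<open>w\<close>-cliques. Every edge lies in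
  exactly one \<open>w\<close>-clique, so distinct \<open>w\<close>-cliques share at most one vertex and
  \<open>N\<^sup>T N = A(C\<^sub>w) + w I\<close>; dually \<open>N N\<^sup>T = A(\<Gamma>) + r I\<close>, where \<open>r = k / (w - 1)\<close> is the number
  of \<open>w\<close>-cliques through each vertex. Sylvester's determinant identity
  \<open>det (y I\<^sub>m - N\<^sup>T N) = y\<^bsup>m - n\<^esup> det (y I\<^sub>n - N N\<^sup>T)\<close> at \<open>y = \<lambda> + w\<close> is therefore the claim.\<close>

lemma det_four_block_mat_lower_right_one:
  fixes A :: "'a::idom mat"
  assumes A: "A \<in> carrier_mat n n" and B: "B \<in> carrier_mat n m" and C: "C \<in> carrier_mat m n"
  shows "det (four_block_mat A B C (1\<^sub>m m)) = det (A - B * C)"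
proof -
  define L where "L = four_block_mat (1\<^sub>m n) (- B) (0\<^sub>m m n) (1\<^sub>m m)"
  have "det L = 1"
    unfolding L_def using B by (subst det_four_block_mat_lower_left_zero[of _ n _ m]) auto
  moreover have "L \<in> carrier_mat (n + m) (n + m)"
    unfolding L_def using B by auto
  ultimately have "det (four_block_mat A B C (1\<^sub>m m)) = det (L * four_block_mat A B C (1\<^sub>m m))"
    using A B C by (simp add: det_mult[of L "n + m"])
  also have "L * four_block_mat A B C (1\<^sub>m m) = four_block_mat (A - B * C) (0\<^sub>m n m) C (1\<^sub>m m)"
    unfolding L_def using A B C
    by (subst mult_four_block_mat[of _ n n _ m _ m _ _ n _ m]) auto
  also have "det \<dots> = det (A - B * C)"
    using A B C by (subst det_four_block_mat_upper_right_zero[of _ n _ m]) auto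
  finally show ?thesis .
qed

lemma det_four_block_mat_upper_left_scalar:
  fixes B :: "'a::field mat"
  assumes y: "y \<noteq> 0" and B: "B \<in> carrier_mat n m" and C: "C \<in> carrier_mat m n"
  shows "det (four_block_mat (y \<cdot>\<^sub>m 1\<^sub>m n) B C (1\<^sub>m m))
    = y powi (int n - int m) * det (y \<cdot>\<^sub>m 1\<^sub>m m - C * B)"
proof -
  define L where "L = four_block_mat (1\<^sub>m n) (0\<^sub>m n m) (- ((1 / y) \<cdot>\<^sub>m C)) (1\<^sub>m m)"
  define S where "S = 1\<^sub>m m - (1 / y) \<cdot>\<^sub>m (C * B)"
  have S: "S \<in> carrier_mat m m"
    unfolding S_def using B C by auto
  have "det L = 1"
    unfolding L_def using C by (subst det_four_block_mat_upper_right_zero[of _ n _ m]) auto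
  moreover have "L \<in> carrier_mat (n + m) (n + m)"
    unfolding L_def using C by auto
  ultimately have "det (four_block_mat (y \<cdot>\<^sub>m 1\<^sub>m n) B C (1\<^sub>m m))
      = det (L * four_block_mat (y \<cdot>\<^sub>m 1\<^sub>m n) B C (1\<^sub>m m))"
    using B C by (simp add: det_mult[of L "n + m"])
  also have "L * four_block_mat (y \<cdot>\<^sub>m 1\<^sub>m n) B C (1\<^sub>m m)
      = four_block_mat (y \<cdot>\<^sub>m 1\<^sub>m n) B (0\<^sub>m m n) S"
  proof -
    have "- ((1 / y) \<cdot>\<^sub>m C * (y \<cdot>\<^sub>m 1\<^sub>m n)) + C = 0\<^sub>m m n"
      by (rule eq_matI) (use y C in \<open>auto simp: scalar_prod_def
        mult.commute[of _ "if _ then _ else _"] if_distrib cong: if_cong\<close>)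
    moreover have "- ((1 / y) \<cdot>\<^sub>m C * B) + 1\<^sub>m m = S"
      unfolding S_def using B C by (intro eq_matI) (auto simp: mult_smult_assoc_mat)
    ultimately show ?thesis
      unfolding L_def using B C
      by (subst mult_four_block_mat[of _ n n _ m _ m _ _ n _ m]) auto
  qed
  also have "det \<dots> = y ^ n * det S"
    using B S by (subst det_four_block_mat_lower_left_zero[of _ n _ m]) auto
  also have "det S = y powi - int m * det (y \<cdot>\<^sub>m S)"
    using y S by (simp add: power_int_minus field_simps)
  also have "y \<cdot>\<^sub>m S = y \<cdot>\<^sub>m 1\<^sub>m m - C * B"
    unfolding S_def using y B C by (auto intro!: eq_matI simp: scalar_prod_def right_diff_distrib)
  finally show ?thesis
    using y by (simp add: power_int_diff power_int_minus divide_inverse mult.assoc)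
qed

lemma det_sylvester:
  fixes B :: "'a::field mat"
  assumes "y \<noteq> 0" and B: "B \<in> carrier_mat n m" and C: "C \<in> carrier_mat m n"
  shows "det (y \<cdot>\<^sub>m 1\<^sub>m n - B * C) = y powi (int n - int m) * det (y \<cdot>\<^sub>m 1\<^sub>m m - C * B)"
  using det_four_block_mat_lower_right_one[of "y \<cdot>\<^sub>m 1\<^sub>m n" n B m C]
    det_four_block_mat_upper_left_scalar[OF assms] B C by simp

lemma det_on_cong:
  assumes "\<And>i j. i \<in> A \<Longrightarrow> j \<in> A \<Longrightarrow> M i j = M' i j"
  shows "det_on A M = det_on A M'"
  unfolding det_on_def
  by (intro sum.cong refl arg_cong2[where f = "(*)"] prod.cong)
    (auto intro!: assms simp: permutes_in_image)

lemma det_on_reindex: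
  assumes f: "bij_betw f A B" and A: "finite A"
  shows "det_on B M = det_on A (\<lambda>i j. M (f i) (f j))"
proof -
  have inj: "inj_on f A"
    using f by (rule bij_betw_imp_inj_on)
  have "bij_betw (map_permutation A f) {p. p permutes A} {q. q permutes B}"
  proof (rule bij_betw_cong[THEN iffD1, OF _ bij_betw_permutations[OF f]])
    show "(\<lambda>p x. if x \<in> B then f (p (inv_into A f x)) else x) p = map_permutation A f p"
      if "p \<in> {p. p permutes A}" for p
      using f by (auto simp: map_permutation_def restrict_id_def bij_betw_def)
  qed
  then have "det_on B M = (\<Sum>p | p permutes A.
      of_int (sign (map_permutation A f p)) * (\<Prod>i\<in>B. M i (map_permutation A f p i)))"
    unfolding det_on_def by (rule sum.reindex_bij_betw[symmetric])
  also have "\<dots> = (\<Sum>p | p permutes A. of_int (sign p) * (\<Prod>j\<in>A. M (f j) (f (p j))))"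
  proof (intro sum.cong refl)
    fix p assume p: "p \<in> {p. p permutes A}"
    have "(\<Prod>i\<in>B. M i (map_permutation A f p i)) = (\<Prod>j\<in>A. M (f j) (map_permutation A f p (f j)))"
      by (rule prod.reindex_bij_betw[OF f, symmetric])
    also have "\<dots> = (\<Prod>j\<in>A. M (f j) (f (p j)))"
      using inj by (intro prod.cong refl) (simp add: map_permutation_apply)
    finally show "of_int (sign (map_permutation A f p)) * (\<Prod>i\<in>B. M i (map_permutation A f p i))
        = of_int (sign p) * (\<Prod>j\<in>A. M (f j) (f (p j)))"
      using p inj A by (simp add: sign_map_permutation)
  qed
  finally show ?thesis
    unfolding det_on_def .
qed

lemma det_on_atLeastLessThan: "det_on {0..<n} M = det (mat n n (\<lambda>(i, j). M i j))"
  unfolding det_on_def det_def by (auto intro!: sum.cong prod.cong simp: permutes_in_image)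

lemma det_on_eq_det:
  assumes "bij_betw f {0..<n} A"
  shows "det_on A M = det (mat n n (\<lambda>(i, j). M (f i) (f j)))"
  using det_on_reindex[OF assms] by (simp add: det_on_atLeastLessThan)

lemma det_on_sylvester:
  fixes B :: "'i \<Rightarrow> 'k \<Rightarrow> 'a::field" and C :: "'k \<Rightarrow> 'i \<Rightarrow> 'a"
  assumes I: "finite I" and K: "finite K" and y: "y \<noteq> 0"
  shows "det_on I (\<lambda>i j. (if i = j then y else 0) - (\<Sum>k\<in>K. B i k * C k j))
    = y powi (int (card I) - int (card K))
      * det_on K (\<lambda>k l. (if k = l then y else 0) - (\<Sum>i\<in>I. C k i * B i l))"
proof -
  obtain f where f: "bij_betw f {0..<card I} I"
    using ex_bij_betw_nat_finite[OF I] by blast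
  obtain g where g: "bij_betw g {0..<card K} K"
    using ex_bij_betw_nat_finite[OF K] by blast
  define Bm where "Bm = mat (card I) (card K) (\<lambda>(i, k). B (f i) (g k))"
  define Cm where "Cm = mat (card K) (card I) (\<lambda>(k, i). C (g k) (f i))"
  have f_eq: "f i = f j \<longleftrightarrow> i = j" if "i < card I" "j < card I" for i j
    using f that by (auto simp: bij_betw_def inj_on_def)
  have g_eq: "g k = g l \<longleftrightarrow> k = l" if "k < card K" "l < card K" for k l
    using g that by (auto simp: bij_betw_def inj_on_def)
  have "det_on I (\<lambda>i j. (if i = j then y else 0) - (\<Sum>k\<in>K. B i k * C k j))
      = det (y \<cdot>\<^sub>m 1\<^sub>m (card I) - Bm * Cm)"
    unfolding det_on_eq_det[OF f] Bm_def Cm_def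
    by (intro arg_cong[where f = det] eq_matI)
      (auto simp: f_eq scalar_prod_def sum.reindex_bij_betw[OF g, symmetric])
  also have "\<dots> = y powi (int (card I) - int (card K)) * det (y \<cdot>\<^sub>m 1\<^sub>m (card K) - Cm * Bm)"
    by (rule det_sylvester[OF y]) (simp_all add: Bm_def Cm_def)
  also have "det (y \<cdot>\<^sub>m 1\<^sub>m (card K) - Cm * Bm)
      = det_on K (\<lambda>k l. (if k = l then y else 0) - (\<Sum>i\<in>I. C k i * B i l))"
    unfolding det_on_eq_det[OF g] Bm_def Cm_def
    by (intro arg_cong[where f = det] eq_matI)
      (auto simp: g_eq scalar_prod_def sum.reindex_bij_betw[OF f, symmetric])
  finally show ?thesis .
qed

locale clique_regular_graph =
  fixes V :: "'a set" and E :: "'a \<Rightarrow> 'a \<Rightarrow> bool" and w :: nat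
  assumes simple: "simple_graph V E" and clique_regular: "clique_regular V E w"
begin

abbreviation cliques :: "'a set set" where
  "cliques \<equiv> clique_graph_vertices V E w"

lemma finite_V: "finite V"
  using simple by (simp add: simple_graph_def)

lemma not_E_refl: "\<not> E v v"
  using simple by (simp add: simple_graph_def)

lemma cliquesD:
  assumes "S \<in> cliques"
  shows "S \<subseteq> V" "card S = w" "u \<in> S \<Longrightarrow> v \<in> S \<Longrightarrow> u \<noteq> v \<Longrightarrow> E u v"
  using assms by (auto simp: clique_graph_vertices_def is_clique_def)

lemma finite_cliques: "finite cliques"
proof (rule finite_subset)
  show "cliques \<subseteq> Pow V"
    using cliquesD(1) by blast
qed (simp add: finite_V)

lemma ex1_clique_containing_edge: "E u v \<Longrightarrow> \<exists>!S. S \<in> cliques \<and> u \<in> S \<and> v \<in> S"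
  using clique_regular by (simp add: clique_regular_def clique_graph_vertices_def)

lemma cliques_eqI:
  assumes "S \<in> cliques" "T \<in> cliques" "u \<in> S \<inter> T" "v \<in> S \<inter> T" "u \<noteq> v"
  shows "S = T"
  using ex1_clique_containing_edge[OF cliquesD(3)[OF assms(1)]] assms by blast

lemma card_Int_cliques:
  assumes S: "S \<in> cliques" and T: "T \<in> cliques"
  shows "card (S \<inter> T) = (if S = T then w else of_bool (clique_graph_adj cliques S T))"
proof (cases "S \<noteq> T \<and> S \<inter> T \<noteq> {}")
  case True
  then obtain u where u: "u \<in> S \<inter> T" by blast
  with True have "S \<inter> T = {u}"
    using cliques_eqI[OF S T u] by blast
  with True S T show ?thesis by (simp add: clique_graph_adj_def)
qed (use S T in \<open>auto simp: clique_graph_adj_def cliquesD(2)\<close>)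

lemma card_cliques_containing_pair:
  assumes "u \<noteq> v"
  shows "card {S \<in> cliques. u \<in> S \<and> v \<in> S} = of_bool (E u v)"
proof (cases "E u v")
  case True
  then obtain S where "S \<in> cliques" "u \<in> S" "v \<in> S"
    using ex1_clique_containing_edge by blast
  then have "{S \<in> cliques. u \<in> S \<and> v \<in> S} = {S}"
    using cliques_eqI assms by blast
  with True show ?thesis by simp
next
  case False
  then have "{S \<in> cliques. u \<in> S \<and> v \<in> S} = {}"
    using cliquesD(3) assms by blast
  with False show ?thesis by (simp only: card.empty) simp
qed

lemma degree_eq_card_cliques_containing:
  "card {u \<in> V. E v u} = card {S \<in> cliques. v \<in> S} * (w - 1)"
proof -
  let ?Cv = "{S \<in> cliques. v \<in> S}"
  have "{u \<in> V. E v u} = (\<Union>S\<in>?Cv. S - {v})"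
  proof (intro equalityI subsetI)
    fix u assume "u \<in> {u \<in> V. E v u}"
    then show "u \<in> (\<Union>S\<in>?Cv. S - {v})"
      using ex1_clique_containing_edge[of v u] not_E_refl by blast
  qed (auto dest: cliquesD)
  also have "card \<dots> = (\<Sum>S\<in>?Cv. card (S - {v}))"
  proof (rule card_UN_disjoint)
    show "\<forall>S\<in>?Cv. \<forall>T\<in>?Cv. S \<noteq> T \<longrightarrow> (S - {v}) \<inter> (T - {v}) = {}"
      using cliques_eqI[of _ _ _ v] by blast
  qed (use finite_cliques finite_V in \<open>auto dest: cliquesD intro: finite_subset\<close>)
  also have "\<dots> = (\<Sum>S\<in>?Cv. w - 1)"
    by (intro sum.cong refl) (simp add: cliquesD(2))
  finally show ?thesis by simp
qed

lemma sum_card_cliques_containing: "(\<Sum>v\<in>V. card {S \<in> cliques. v \<in> S}) = card cliques * w"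
proof -
  have "(\<Sum>v\<in>V. card {S \<in> cliques. v \<in> S}) = (\<Sum>S\<in>cliques. card {v \<in> V. v \<in> S})"
    unfolding card_eq_sum by (rule sum.swap_restrict[OF finite_V finite_cliques])
  also have "\<dots> = (\<Sum>S\<in>cliques. w)"
  proof (intro sum.cong refl)
    fix S assume S: "S \<in> cliques"
    then have "{v \<in> V. v \<in> S} = S"
      using cliquesD(1) by blast
    then show "card {v \<in> V. v \<in> S} = w"
      using cliquesD(2)[OF S] by simp
  qed
  finally show ?thesis by simp
qed

lemma clique_incidence_gram:
  assumes "S \<in> cliques" "T \<in> cliques"
  shows "(\<Sum>v\<in>V. of_bool (v \<in> S) * of_bool (v \<in> T))
    = (if S = T then real w else 0) + adj_matrix (clique_graph_adj cliques) S T"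
proof -
  have "(\<Sum>v\<in>V. of_bool (v \<in> S) * of_bool (v \<in> T)) = real (card (V \<inter> {v. v \<in> S \<and> v \<in> T}))"
    using finite_V by (simp flip: of_bool_conj)
  also have "V \<inter> {v. v \<in> S \<and> v \<in> T} = S \<inter> T"
    using cliquesD(1)[OF assms(1)] by blast
  finally show ?thesis
    using card_Int_cliques[OF assms] by (simp add: adj_matrix_def clique_graph_adj_def)
qed

lemma vertex_incidence_gram:
  "(\<Sum>S\<in>cliques. of_bool (u \<in> S) * of_bool (v \<in> S))
    = (if u = v then real (card {S \<in> cliques. v \<in> S}) else 0) + adj_matrix E u v"
proof -
  have "(\<Sum>S\<in>cliques. of_bool (u \<in> S) * of_bool (v \<in> S))
      = real (card {S \<in> cliques. u \<in> S \<and> v \<in> S})"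
    using finite_cliques by (simp add: Collect_conj_eq Int_commute flip: of_bool_conj)
  then show ?thesis
    using card_cliques_containing_pair[of u v] not_E_refl by (simp add: adj_matrix_def)
qed

lemma card_cliques_containing_regular:
  assumes "regular_graph V E k" "w \<ge> 2" "v \<in> V"
  shows "real (card {S \<in> cliques. v \<in> S}) = real k / (real w - 1)"
proof -
  have "real (card {S \<in> cliques. v \<in> S}) * (real w - 1) = real k"
    using degree_eq_card_cliques_containing[of v] assms
    by (simp add: regular_graph_def of_nat_diff)
  then show ?thesis
    using assms(2) by (simp add: field_simps)
qed

lemma card_cliques_regular:
  assumes "regular_graph V E k"
  shows "card cliques * (w * (w - 1)) = card V * k"
proof -
  have "card V * k = (\<Sum>v\<in>V. card {S \<in> cliques. v \<in> S} * (w - 1))"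
    using assms degree_eq_card_cliques_containing by (simp add: regular_graph_def)
  also have "\<dots> = card cliques * w * (w - 1)"
    by (simp add: sum_card_cliques_containing flip: sum_distrib_right)
  finally show ?thesis by simp
qed

end

theorem theorem8:
  fixes V :: "'a set" and E :: "'a \<Rightarrow> 'a \<Rightarrow> bool" and w k n m :: nat
  assumes "w \<ge> 2"
    and "simple_graph V E"
    and "card V = n"
    and "regular_graph V E k"
    and "clique_regular V E w"
    and "m = (n * k) div (w * (w - 1))"
  shows "\<forall>x::real. x \<noteq> - real w \<longrightarrow>
    char_poly_graph (clique_graph_vertices V E w) (clique_graph_adj (clique_graph_vertices V E w)) x
    = (x + real w) powi (int m - int n) *
      char_poly_graph V E (x + real w - real k / (real w - 1))"
proof (intro allI impI)
  fix x :: real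
  assume "x \<noteq> - real w"
  then have y: "x + real w \<noteq> 0"
    by linarith
  interpret clique_regular_graph V E w
    using assms(2,5) by unfold_locales
  have "w * (w - 1) \<noteq> 0"
    using assms(1) by simp
  then have m: "m = card cliques"
    using card_cliques_regular[OF assms(4)] assms(3,6) by (metis nonzero_mult_div_cancel_right)
  have "char_poly_graph cliques (clique_graph_adj cliques) x
      = det_on cliques (\<lambda>S T. (if S = T then x + real w else 0)
          - (\<Sum>v\<in>V. of_bool (v \<in> S) * of_bool (v \<in> T)))"
    unfolding char_poly_graph_def by (rule det_on_cong) (simp add: clique_incidence_gram)
  also have "\<dots> = (x + real w) powi (int (card cliques) - int (card V))
      * det_on V (\<lambda>u v. (if u = v then x + real w else 0)
          - (\<Sum>S\<in>cliques. of_bool (u \<in> S) * of_bool (v \<in> S)))"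
    by (rule det_on_sylvester[OF finite_cliques finite_V y])
  also have "det_on V (\<lambda>u v. (if u = v then x + real w else 0)
          - (\<Sum>S\<in>cliques. of_bool (u \<in> S) * of_bool (v \<in> S)))
      = char_poly_graph V E (x + real w - real k / (real w - 1))"
    unfolding char_poly_graph_def
    by (rule det_on_cong) (simp add: vertex_incidence_gram card_cliques_containing_regular[OF assms(4,1)])
  finally show "char_poly_graph cliques (clique_graph_adj cliques) x
      = (x + real w) powi (int m - int n) * char_poly_graph V E (x + real w - real k / (real w - 1))"
    using m assms(3) by simp
qed

end
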